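(* Let $A$ be an $\mathbb{F}_p$-algebra, $d_i\in\mathbb{N}\cup\{\infty\}$, $I=\{\alpha\in\mathbb{N}^n\mid\alpha_i<p^{d_i}\ \forall i\}$, and let $\{x^{[\alpha]}\mid\alpha\in I\}$ be an iterative multi-sequence of rank $n$ in $A$. Then for each $i$ the sequence $\{x_i^{[j]}:=x^{[je_i]}\mid 0\le j<p^{d_i}\}$ is an iterative sequence of rank $1$, these sequences pairwise commute and have the common initial element $x^{[0]}$, and $x^{[\alpha]}=x_1^{[\alpha_1]}\cdots x_n^{[\alpha_n]}$ for all $\alpha\in I$ (i.e. the multi-sequence is their product). Conversely, the product $\{x_1^{[\alpha_1]}\cdots x_n^{[\alpha_n]}\mid\alpha\in I\}$ of any $n$ pairwise commuting iterative sequences $\{x_i^{[j]}\mid0\le j<p^{d_i}\}$ of rank $1$ with a common initial element $x_1^{[0]}=\cdots=x_n^{[0]}$ is an iterative multi-sequence of rank $n$.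
   Context: A family $\{y^{[\alpha]}\mid\alpha\in I\}$ in $A$ is an iterative multi-sequence (of rank $n$) if $y^{[\alpha]}y^{[\beta]}=\binom{\alpha+\beta}{\beta}y^{[\alpha+\beta]}$ for all $\alpha,\beta\in I$, where $\binom{\alpha+\beta}{\beta}=\prod_i\binom{\alpha_i+\beta_i}{\beta_i}$ is taken in $\mathbb{F}_p$ (and the right side is $0$ when $\alpha+\beta\notin I$, where this coefficient vanishes). An iterative sequence of rank 1 is the case $n=1$. Sequences commute if all their elements pairwise commute. $e_i$ is the $i$-th standard basis vector of $\mathbb{Z}^n$. *)

theory Defs
  imports Main "HOL-Library.Extended_Nat" "HOL-Computational_Algebra.Primes"
begin

definition below :: "nat \<Rightarrow> enat \<Rightarrow> nat \<Rightarrow> bool" where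
  "below p d k \<longleftrightarrow> (case d of \<infinity> \<Rightarrow> True | enat e \<Rightarrow> k < p ^ e)"

text \<open>The index set I of multi-indices in N^n (coordinates 0..n-1; functions vanishing from n on).\<close>
definition Idx :: "nat \<Rightarrow> nat \<Rightarrow> (nat \<Rightarrow> enat) \<Rightarrow> (nat \<Rightarrow> nat) set" where
  "Idx p n d = {\<alpha>. (\<forall>i<n. below p (d i) (\<alpha> i)) \<and> (\<forall>i\<ge>n. \<alpha> i = 0)}"

definition iter_multi :: "nat \<Rightarrow> nat \<Rightarrow> (nat \<Rightarrow> enat) \<Rightarrow> ((nat \<Rightarrow> nat) \<Rightarrow> 'a::ring_1) \<Rightarrow> bool" where
  "iter_multi p n d y \<longleftrightarrow>
     (\<forall>\<alpha>\<in>Idx p n d. \<forall>\<beta>\<in>Idx p n d.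
        y \<alpha> * y \<beta> = of_nat (\<Prod>i<n. (\<alpha> i + \<beta> i) choose (\<beta> i))
                     * (if (\<lambda>i. \<alpha> i + \<beta> i) \<in> Idx p n d then y (\<lambda>i. \<alpha> i + \<beta> i) else 0))"

definition iter_seq :: "nat \<Rightarrow> enat \<Rightarrow> (nat \<Rightarrow> 'a::ring_1) \<Rightarrow> bool" where
  "iter_seq p e x \<longleftrightarrow> iter_multi p 1 (\<lambda>_. e) (\<lambda>\<alpha>. x (\<alpha> 0))"

definition unitv :: "nat \<Rightarrow> nat \<Rightarrow> nat \<Rightarrow> nat" where
  "unitv i j = (\<lambda>k. if k = i then j else 0)"

definition seqs_commute :: "nat \<Rightarrow> nat \<Rightarrow> (nat \<Rightarrow> enat) \<Rightarrow> (nat \<Rightarrow> nat \<Rightarrow> 'a::ring_1) \<Rightarrow> bool" where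
  "seqs_commute p n d xs \<longleftrightarrow>
     (\<forall>i<n. \<forall>k<n. i \<noteq> k \<longrightarrow> (\<forall>a b. below p (d i) a \<longrightarrow> below p (d k) b \<longrightarrow>
        xs i a * xs k b = xs k b * xs i a))"

definition seq_prod :: "nat \<Rightarrow> (nat \<Rightarrow> nat \<Rightarrow> 'a::ring_1) \<Rightarrow> (nat \<Rightarrow> nat) \<Rightarrow> 'a" where
  "seq_prod n xs \<alpha> = prod_list (map (\<lambda>i. xs i (\<alpha> i)) [0..<n])"

end

theory Submission
  imports Defs
begin

text \<open>Two multi-indices with disjoint supports have multinomial coefficient 1, so for them
  \<open>x[\<alpha>] x[\<beta>] = x[\<alpha> + \<beta>]\<close>. Writing \<open>\<alpha> = \<alpha>\<^sub>1 e\<^sub>1 + \<dots> + \<alpha>\<^sub>n e\<^sub>n\<close> this yields the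
  factorisation of a multi-sequence and the commutation of its coordinate sequences. Conversely,
  in a product of commuting rank-one sequences the factors can be multiplied coordinatewise, and
  the multinomial coefficient of \<open>\<alpha>, \<beta>\<close> is the product of the coordinate binomial coefficients.\<close>

lemma prod_list_commute:
  fixes y :: "'a::monoid_mult"
  assumes "\<forall>z\<in>set zs. y * z = z * y"
  shows "y * prod_list zs = prod_list zs * y"
  using assms by (induction zs) (simp_all, metis mult.assoc)

lemma prod_list_map_mult_commuting:
  fixes a b :: "'i \<Rightarrow> 'a::monoid_mult"
  assumes "distinct is" and "\<forall>i\<in>set is. \<forall>k\<in>set is. i \<noteq> k \<longrightarrow> a i * b k = b k * a i"
  shows "prod_list (map a is) * prod_list (map b is) = prod_list (map (\<lambda>i. a i * b i) is)"
  using assms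
proof (induction "is")
  case Nil
  then show ?case by simp
next
  case (Cons i "is")
  have "\<forall>z\<in>set (map a is). b i * z = z * b i"
    using Cons.prems by auto
  then have "prod_list (map a is) * b i = b i * prod_list (map a is)"
    by (simp add: prod_list_commute)
  then have "prod_list (map a (i # is)) * prod_list (map b (i # is))
      = (a i * b i) * (prod_list (map a is) * prod_list (map b is))"
    by (simp add: mult.assoc) (metis mult.assoc)
  then show ?case using Cons by simp
qed

lemma prod_list_map_of_nat_mult:
  fixes f :: "'i \<Rightarrow> 'a::semiring_1"
  shows "prod_list (map (\<lambda>i. of_nat (c i) * f i) is) = of_nat (prod_list (map c is)) * prod_list (map f is)"
  by (induction "is") (simp_all add: mult.assoc, metis mult.assoc mult_of_nat_commute)

lemma prod_list_map_if_zero: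
  fixes f :: "'i \<Rightarrow> 'a::semiring_1"
  shows "prod_list (map (\<lambda>i. if B i then f i else 0) is) = (if \<forall>i\<in>set is. B i then prod_list (map f is) else 0)"
  by (induction "is") auto

lemma below_zero: "0 < p \<Longrightarrow> below p d 0"
  by (cases d) (auto simp: below_def)

lemma iter_seq_iff:
  "iter_seq p e x \<longleftrightarrow> (\<forall>a b. below p e a \<longrightarrow> below p e b \<longrightarrow>
     x a * x b = of_nat ((a + b) choose b) * (if below p e (a + b) then x (a + b) else 0))"
proof
  assume x: "iter_seq p e x"
  show "\<forall>a b. below p e a \<longrightarrow> below p e b \<longrightarrow>
     x a * x b = of_nat ((a + b) choose b) * (if below p e (a + b) then x (a + b) else 0)"
  proof (intro allI impI)
    fix a b assume "below p e a" "below p e b"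
    then have "(\<lambda>k. if k = 0 then a else 0) \<in> Idx p 1 (\<lambda>_. e)"
      and "(\<lambda>k. if k = 0 then b else 0) \<in> Idx p 1 (\<lambda>_. e)"
      by (auto simp: Idx_def)
    from x[unfolded iter_seq_def iter_multi_def, rule_format, OF this]
    show "x a * x b = of_nat ((a + b) choose b) * (if below p e (a + b) then x (a + b) else 0)"
      by (simp add: Idx_def)
  qed
next
  assume law: "\<forall>a b. below p e a \<longrightarrow> below p e b \<longrightarrow>
     x a * x b = of_nat ((a + b) choose b) * (if below p e (a + b) then x (a + b) else 0)"
  show "iter_seq p e x"
    unfolding iter_seq_def iter_multi_def
  proof (intro ballI)
    fix \<alpha> \<beta> assume "\<alpha> \<in> Idx p 1 (\<lambda>_. e)" "\<beta> \<in> Idx p 1 (\<lambda>_. e)"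
    moreover from this have "x (\<alpha> 0) * x (\<beta> 0) = of_nat ((\<alpha> 0 + \<beta> 0) choose \<beta> 0)
        * (if below p e (\<alpha> 0 + \<beta> 0) then x (\<alpha> 0 + \<beta> 0) else 0)"
      using law by (simp add: Idx_def)
    ultimately show "x (\<alpha> 0) * x (\<beta> 0) = of_nat (\<Prod>i<1. (\<alpha> i + \<beta> i) choose \<beta> i)
        * (if (\<lambda>i. \<alpha> i + \<beta> i) \<in> Idx p 1 (\<lambda>_. e) then x (\<alpha> 0 + \<beta> 0) else 0)"
      by (simp add: Idx_def)
  qed
qed

lemma unitv_add: "(\<lambda>k. unitv i a k + unitv i b k) = unitv i (a + b)"
  by (auto simp: unitv_def)

lemma unitv_in_Idx_iff: "i < n \<Longrightarrow> 0 < p \<Longrightarrow> unitv i a \<in> Idx p n d \<longleftrightarrow> below p (d i) a"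
  by (auto simp: Idx_def unitv_def below_zero)

lemma prod_choose_unitv:
  assumes "i < n"
  shows "(\<Prod>k<n. (unitv i a k + unitv i b k) choose unitv i b k) = (a + b) choose b"
proof -
  have "(\<Prod>k<n. (unitv i a k + unitv i b k) choose unitv i b k)
      = (\<Prod>k\<in>{i}. (unitv i a k + unitv i b k) choose unitv i b k)"
    using assms by (intro prod.mono_neutral_right) (auto simp: unitv_def)
  then show ?thesis by (simp add: unitv_def)
qed

lemma iter_multi_mult_disjoint:
  assumes x: "iter_multi p n d x" and "\<alpha> \<in> Idx p n d" "\<beta> \<in> Idx p n d"
    and disjoint: "\<forall>k. \<alpha> k = 0 \<or> \<beta> k = 0"
  shows "x \<alpha> * x \<beta> = x (\<lambda>k. \<alpha> k + \<beta> k)"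
proof -
  have "(\<lambda>k. \<alpha> k + \<beta> k) \<in> Idx p n d"
    using assms(2-3) disjoint by (auto simp: Idx_def) (metis add_0 add_0_right)
  moreover have "(\<Prod>k<n. (\<alpha> k + \<beta> k) choose \<beta> k) = 1"
    using disjoint by (intro prod.neutral) (metis add_0 binomial_n_0 binomial_n_n)
  ultimately show ?thesis
    using x assms(2-3) unfolding iter_multi_def by simp
qed

lemma iter_multi_coordinate_seq:
  assumes x: "iter_multi p n d x" and "0 < p" "i < n"
  shows "iter_seq p (d i) (\<lambda>j. x (unitv i j))"
  unfolding iter_seq_iff
proof (intro allI impI)
  fix a b assume "below p (d i) a" "below p (d i) b"
  then have "unitv i a \<in> Idx p n d" "unitv i b \<in> Idx p n d"
    using assms(2-3) by (simp_all add: unitv_in_Idx_iff)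
  from x[unfolded iter_multi_def, rule_format, OF this]
  show "x (unitv i a) * x (unitv i b)
      = of_nat ((a + b) choose b) * (if below p (d i) (a + b) then x (unitv i (a + b)) else 0)"
    unfolding prod_choose_unitv[OF \<open>i < n\<close>] unitv_add unitv_in_Idx_iff[OF \<open>i < n\<close> \<open>0 < p\<close>] .
qed

lemma iter_multi_coordinate_seqs_commute:
  assumes x: "iter_multi p n d x" and "0 < p"
  shows "seqs_commute p n d (\<lambda>i j. x (unitv i j))"
  unfolding seqs_commute_def
proof (intro allI impI)
  fix i k a b assume "i < n" "k < n" "i \<noteq> k" "below p (d i) a" "below p (d k) b"
  then have ua: "unitv i a \<in> Idx p n d" and ub: "unitv k b \<in> Idx p n d"
    and disjoint: "\<forall>j. unitv i a j = 0 \<or> unitv k b j = 0"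
    using \<open>0 < p\<close> by (simp_all add: unitv_in_Idx_iff) (simp add: unitv_def)
  have "x (unitv i a) * x (unitv k b) = x (\<lambda>j. unitv i a j + unitv k b j)"
    using iter_multi_mult_disjoint[OF x ua ub disjoint] .
  also have "\<dots> = x (unitv k b) * x (unitv i a)"
    using iter_multi_mult_disjoint[OF x ub ua] disjoint by (simp add: add.commute disj_commute)
  finally show "x (unitv i a) * x (unitv k b) = x (unitv k b) * x (unitv i a)" .
qed

lemma iter_multi_eq_seq_prod:
  assumes x: "iter_multi p n d x" and "0 < p" "1 \<le> n" and \<alpha>: "\<alpha> \<in> Idx p n d"
  shows "x \<alpha> = seq_prod n (\<lambda>i j. x (unitv i j)) \<alpha>"
proof -
  let ?trunc = "\<lambda>m k. if k < m then \<alpha> k else 0"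
  have trunc_Idx: "?trunc m \<in> Idx p n d" for m
    using \<alpha> \<open>0 < p\<close> by (auto simp: Idx_def below_zero)
  have "prod_list (map (\<lambda>i. x (unitv i (\<alpha> i))) [0..<m]) = x (?trunc m)" if "1 \<le> m" "m \<le> n" for m
    using that
  proof (induction m rule: nat_induct_at_least)
    case base
    have "unitv 0 (\<alpha> 0) = ?trunc 1" by (auto simp: unitv_def)
    then show ?case by simp
  next
    case (Suc m)
    have "below p (d m) (\<alpha> m)"
      using \<alpha> Suc.prems by (simp add: Idx_def)
    then have unitv_Idx: "unitv m (\<alpha> m) \<in> Idx p n d"
      using \<open>0 < p\<close> Suc.prems by (simp add: unitv_in_Idx_iff)
    have disjoint: "\<forall>k. ?trunc m k = 0 \<or> unitv m (\<alpha> m) k = 0"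
      by (simp add: unitv_def)
    have "(\<lambda>k. ?trunc m k + unitv m (\<alpha> m) k) = ?trunc (Suc m)"
      by (auto simp: unitv_def)
    then have "x (?trunc m) * x (unitv m (\<alpha> m)) = x (?trunc (Suc m))"
      using iter_multi_mult_disjoint[OF x trunc_Idx unitv_Idx disjoint] by simp
    then show ?case using Suc by simp
  qed
  moreover have "?trunc n = \<alpha>"
    using \<alpha> by (auto simp: Idx_def)
  ultimately show ?thesis
    using \<open>1 \<le> n\<close> by (simp add: seq_prod_def)
qed

lemma seq_prod_iter_multi:
  assumes seqs: "\<forall>i<n. iter_seq p (d i) (xs i)" and comm: "seqs_commute p n d xs"
  shows "iter_multi p n d (seq_prod n xs)"
  unfolding iter_multi_def
proof (intro ballI)
  fix \<alpha> \<beta> assume \<alpha>: "\<alpha> \<in> Idx p n d" and \<beta>: "\<beta> \<in> Idx p n d"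
  have "seq_prod n xs \<alpha> * seq_prod n xs \<beta> = prod_list (map (\<lambda>i. xs i (\<alpha> i) * xs i (\<beta> i)) [0..<n])"
    unfolding seq_prod_def
    using comm \<alpha> \<beta> by (intro prod_list_map_mult_commuting) (auto simp: seqs_commute_def Idx_def)
  also have "\<dots> = prod_list (map (\<lambda>i. of_nat ((\<alpha> i + \<beta> i) choose \<beta> i)
      * (if below p (d i) (\<alpha> i + \<beta> i) then xs i (\<alpha> i + \<beta> i) else 0)) [0..<n])"
    using seqs \<alpha> \<beta> by (intro arg_cong[where f = prod_list] map_cong) (auto simp: iter_seq_iff Idx_def)
  also have "\<dots> = of_nat (\<Prod>i<n. (\<alpha> i + \<beta> i) choose \<beta> i)
      * (if \<forall>i<n. below p (d i) (\<alpha> i + \<beta> i) then prod_list (map (\<lambda>i. xs i (\<alpha> i + \<beta> i)) [0..<n]) else 0)"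
    by (auto simp: prod_list_map_of_nat_mult prod_list_map_if_zero atLeast0LessThan
        simp flip: prod.distinct_set_conv_list)
  also have "\<dots> = of_nat (\<Prod>i<n. (\<alpha> i + \<beta> i) choose \<beta> i)
      * (if (\<lambda>i. \<alpha> i + \<beta> i) \<in> Idx p n d then seq_prod n xs (\<lambda>i. \<alpha> i + \<beta> i) else 0)"
    using \<alpha> \<beta> by (auto simp: Idx_def seq_prod_def)
  finally show "seq_prod n xs \<alpha> * seq_prod n xs \<beta> = of_nat (\<Prod>i<n. (\<alpha> i + \<beta> i) choose \<beta> i)
      * (if (\<lambda>i. \<alpha> i + \<beta> i) \<in> Idx p n d then seq_prod n xs (\<lambda>i. \<alpha> i + \<beta> i) else 0)" .
qed

theorem corollary2p5:
  fixes p n :: nat and d :: "nat \<Rightarrow> enat"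
  assumes "prime p" and "of_nat p = (0::'a::ring_1)" and "n \<ge> 1"
  shows "(\<forall>x :: (nat \<Rightarrow> nat) \<Rightarrow> 'a. iter_multi p n d x \<longrightarrow>
            (\<forall>i<n. iter_seq p (d i) (\<lambda>j. x (unitv i j)))
          \<and> seqs_commute p n d (\<lambda>i j. x (unitv i j))
          \<and> (\<forall>i<n. x (unitv i 0) = x (\<lambda>_. 0))
          \<and> (\<forall>\<alpha>\<in>Idx p n d. x \<alpha> = seq_prod n (\<lambda>i j. x (unitv i j)) \<alpha>))
       \<and> (\<forall>xs :: nat \<Rightarrow> nat \<Rightarrow> 'a.
            (\<forall>i<n. iter_seq p (d i) (xs i)) \<and> seqs_commute p n d xs
            \<and> (\<forall>i<n. \<forall>k<n. xs i 0 = xs k 0)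
            \<longrightarrow> iter_multi p n d (seq_prod n xs))"
proof (intro conjI allI impI ballI)
  have p: "0 < p" using \<open>prime p\<close> by (rule prime_gt_0_nat)
  fix x :: "(nat \<Rightarrow> nat) \<Rightarrow> 'a" assume x: "iter_multi p n d x"
  show "iter_seq p (d i) (\<lambda>j. x (unitv i j))" if "i < n" for i
    using iter_multi_coordinate_seq[OF x p that] .
  show "seqs_commute p n d (\<lambda>i j. x (unitv i j))"
    using iter_multi_coordinate_seqs_commute[OF x p] .
  show "x (unitv i 0) = x (\<lambda>_. 0)" for i
    by (simp add: unitv_def)
  show "x \<alpha> = seq_prod n (\<lambda>i j. x (unitv i j)) \<alpha>" if "\<alpha> \<in> Idx p n d" for \<alpha>
    using iter_multi_eq_seq_prod[OF x p \<open>n \<ge> 1\<close> that] .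
next
  fix xs :: "nat \<Rightarrow> nat \<Rightarrow> 'a"
  assume "(\<forall>i<n. iter_seq p (d i) (xs i)) \<and> seqs_commute p n d xs \<and> (\<forall>i<n. \<forall>k<n. xs i 0 = xs k 0)"
  then show "iter_multi p n d (seq_prod n xs)"
    using seq_prod_iter_multi by blast
qed

end
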